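(* Let $\phi:B_E\to B_E$ be analytic with $\phi(0)=0$ and $\lim_{\|z\|\to 1}(1-\|z\|^2)\|\mathcal R\phi(z)\|=0$. Then $$\limsup_{\|z\|\to 1}\frac{(1- \|z\|^2) \|\mathcal R \phi(z)\|}{\sqrt{1- \|\phi(z)\|^2}}=\limsup_{\|\phi(z)\|\to 1}\frac{(1- \|z\|^2) \|\mathcal R \phi(z)\|}{\sqrt{1- \|\phi(z)\|^2}}$$ and $$\limsup_{\|z\|\to 1}\frac{(1- \|z\|^2) |\langle \phi(z), \mathcal R\phi(z)\rangle|}{1- \|\phi(z)\|^2}= \limsup_{\|\phi(z)\|\to 1}\frac{(1- \|z\|^2) |\langle \phi(z), \mathcal R\phi(z)\rangle|}{1- \|\phi(z)\|^2}.$$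
   Context: $E$ is a complex Hilbert space of arbitrary dimension with inner product $\langle\cdot,\cdot\rangle$ and open unit ball $B_E$; $\mathcal R\phi(z)=\phi'(z)(z)$ is the radial derivative. $\limsup_{\|z\|\to1}Q(z)=\lim_{r\to1}\sup\{Q(z):r<\|z\|<1\}$ and $\limsup_{\|\phi(z)\|\to1}Q(z)=\lim_{r\to1}\sup\{Q(z):\|\phi(z)\|>r\}$, with the supremum of the empty set taken to be $0$. *)

theory Defs
  imports "HOL-Analysis.Analysis"
begin

class complex_hilbert = real_inner + complete_space +
  fixes scaleC :: "complex \<Rightarrow> 'a \<Rightarrow> 'a"
  assumes scaleC_of_real: "scaleC (complex_of_real r) x = r *\<^sub>R x"
    and scaleC_add_right: "scaleC c (x + y) = scaleC c x + scaleC c y"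
    and scaleC_add_left: "scaleC (c + d) x = scaleC c x + scaleC d x"
    and scaleC_scaleC: "scaleC c (scaleC d x) = scaleC (c * d) x"
    and scaleC_one: "scaleC 1 x = x"
    and norm_scaleC: "norm (scaleC c x) = cmod c * norm x"

text \<open>The complex inner product (linear in the first argument), recovered from
  the real inner product: Re is the real inner product.\<close>
definition cinner :: "'a::complex_hilbert \<Rightarrow> 'a \<Rightarrow> complex" where
  "cinner x y = Complex (inner x y) (inner x (scaleC \<i> y))"

definition holo_on :: "'a::complex_hilbert set \<Rightarrow> ('a \<Rightarrow> 'b::complex_hilbert) \<Rightarrow> bool" where
  "holo_on S f \<longleftrightarrow> (\<forall>z\<in>S. \<exists>D. (f has_derivative D) (at z) \<and>
      (\<forall>c x. D (scaleC c x) = scaleC c (D x)))"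

definition radial_deriv :: "('a::complex_hilbert \<Rightarrow> 'b::complex_hilbert) \<Rightarrow> 'a \<Rightarrow> 'b" where
  "radial_deriv f z = frechet_derivative f (at z) z"

definition sup0 :: "ereal set \<Rightarrow> ereal" where
  "sup0 S = (if S = {} then 0 else Sup S)"

definition limsup_norm :: "('a::real_normed_vector \<Rightarrow> real) \<Rightarrow> ereal" where
  "limsup_norm Q = Lim (at_left (1::real))
     (\<lambda>r. sup0 ((\<lambda>z. ereal (Q z)) ` {z. r < norm z \<and> norm z < 1}))"

definition limsup_phi :: "('a::real_normed_vector \<Rightarrow> 'b::real_normed_vector) \<Rightarrow> ('a \<Rightarrow> real) \<Rightarrow> ereal" where
  "limsup_phi \<phi> Q = Lim (at_left (1::real))
     (\<lambda>r. sup0 ((\<lambda>z. ereal (Q z)) ` {z. norm z < 1 \<and> r < norm (\<phi> z)}))"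

end

theory Submission
  imports Defs "HOL-Complex_Analysis.Complex_Analysis"
begin

text \<open>By the Schwarz lemma, applied to the complex slices \<open>\<xi> \<mapsto> \<langle>\<phi>(\<xi>u), w\<rangle>\<close>, we have
  \<open>\<parallel>\<phi> z\<parallel> \<le> \<parallel>z\<parallel>\<close>; hence \<open>\<parallel>\<phi> z\<parallel> \<rightarrow> 1\<close> forces \<open>\<parallel>z\<parallel> \<rightarrow> 1\<close> and the second limsup is at most the
  first. Conversely, where \<open>\<parallel>\<phi> z\<parallel> \<le> s < 1\<close> both quotients are bounded by a constant
  multiple of \<open>(1 - \<parallel>z\<parallel>\<^sup>2) \<parallel>\<R>\<phi>(z)\<parallel>\<close>, which tends to \<open>0\<close> as \<open>\<parallel>z\<parallel> \<rightarrow> 1\<close>; so near the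
  sphere only the points with \<open>\<parallel>\<phi> z\<parallel> > s\<close> contribute to the first limsup.\<close>

lemma sup0_le: "(\<And>x. x \<in> S \<Longrightarrow> x \<le> b) \<Longrightarrow> 0 \<le> b \<Longrightarrow> sup0 S \<le> b"
  by (auto simp: sup0_def intro: Sup_least)

lemma sup0_upper: "x \<in> S \<Longrightarrow> x \<le> sup0 S"
  by (auto simp: sup0_def intro: Sup_upper)

lemma sup0_nonneg: "(\<And>x. x \<in> S \<Longrightarrow> 0 \<le> x) \<Longrightarrow> 0 \<le> sup0 (S :: ereal set)"
  by (cases "S = {}") (auto simp: sup0_def intro: Sup_upper2)

lemma sup0_mono: "A \<subseteq> B \<Longrightarrow> (\<And>x. x \<in> B \<Longrightarrow> 0 \<le> x) \<Longrightarrow> sup0 A \<le> sup0 B"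
  by (cases "A = {}") (auto simp: sup0_def intro: Sup_upper2 Sup_subset_mono)

lemma Lim_at_left_1_antitone:
  fixes F :: "real \<Rightarrow> ereal"
  assumes antitone: "\<And>x y. 0 < x \<Longrightarrow> x \<le> y \<Longrightarrow> y < 1 \<Longrightarrow> F y \<le> F x"
  shows "Lim (at_left 1) F = (INF r\<in>{0<..<1}. F r)"
proof (rule tendsto_Lim)
  show "(F \<longlongrightarrow> (INF r\<in>{0<..<1}. F r)) (at_left 1)"
  proof (rule order_tendstoI)
    fix y assume "y < (INF r\<in>{0<..<1}. F r)"
    then have "\<forall>r\<in>{0<..<1}. y < F r" by (simp add: less_INF_D)
    then show "\<forall>\<^sub>F x in at_left 1. y < F x"
      using eventually_at_left_real[of 0 1] by (auto elim: eventually_mono)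
  next
    fix y assume "(INF r\<in>{0<..<1}. F r) < y"
    then obtain r where r: "r \<in> {0<..<1}" "F r < y" by (auto simp: INF_less_iff)
    have "\<forall>\<^sub>F x in at_left 1. x \<in> {r<..<1}" using r by (intro eventually_at_left_real) auto
    then show "\<forall>\<^sub>F x in at_left 1. F x < y"
    proof (rule eventually_mono)
      fix x assume "x \<in> {r<..<1::real}"
      then have "F x \<le> F r" using r by (intro antitone) auto
      then show "F x < y" using r(2) by (rule le_less_trans)
    qed
  qed
qed simp

lemma limsup_norm_eq_limsup_phi:
  fixes Q :: "'a::real_normed_vector \<Rightarrow> real" and \<phi> :: "'a \<Rightarrow> 'b::real_normed_vector"
  assumes contract: "\<And>z. norm z < 1 \<Longrightarrow> norm (\<phi> z) \<le> norm z"
    and nonneg: "\<And>z. norm z < 1 \<Longrightarrow> 0 \<le> Q z"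
    and small: "\<And>s \<epsilon>. 0 < s \<Longrightarrow> s < 1 \<Longrightarrow> 0 < \<epsilon> \<Longrightarrow>
        \<exists>r<1. \<forall>z. r < norm z \<and> norm z < 1 \<and> norm (\<phi> z) \<le> s \<longrightarrow> Q z < \<epsilon>"
  shows "limsup_norm Q = limsup_phi \<phi> Q"
proof -
  define F where "F r = sup0 ((\<lambda>z. ereal (Q z)) ` {z. r < norm z \<and> norm z < 1})" for r
  define G where "G r = sup0 ((\<lambda>z. ereal (Q z)) ` {z. norm z < 1 \<and> r < norm (\<phi> z)})" for r
  have G_nonneg: "0 \<le> G r" for r
    unfolding G_def by (rule sup0_nonneg) (auto intro: nonneg)
  have limsup_norm_INF: "limsup_norm Q = (INF r\<in>{0<..<1}. F r)"
    unfolding limsup_norm_def F_def[symmetric]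
    by (rule Lim_at_left_1_antitone) (unfold F_def, rule sup0_mono, auto intro: nonneg)
  have limsup_phi_INF: "limsup_phi \<phi> Q = (INF r\<in>{0<..<1}. G r)"
    unfolding limsup_phi_def G_def[symmetric]
    by (rule Lim_at_left_1_antitone) (unfold G_def, rule sup0_mono, auto intro: nonneg)
  have G_le_F: "G r \<le> F r" for r
    unfolding G_def F_def using contract
    by (intro sup0_mono) (auto intro: nonneg, fastforce)
  have INF_F_le_G: "(INF r\<in>{0<..<1}. F r) \<le> G s" if s: "0 < s" "s < 1" for s
  proof (rule ereal_le_epsilon2)
    fix \<epsilon> :: real assume \<epsilon>: "0 < \<epsilon>"
    obtain r0 where r0: "r0 < 1"
      "\<And>z. r0 < norm z \<Longrightarrow> norm z < 1 \<Longrightarrow> norm (\<phi> z) \<le> s \<Longrightarrow> Q z < \<epsilon>"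
      using small[OF s \<epsilon>] by blast
    define r where "r = max r0 (1/2)"
    have r: "r \<in> {0<..<1}" using r0 by (auto simp: r_def)
    have "F r \<le> G s + ereal \<epsilon>"
      unfolding F_def
    proof (rule sup0_le)
      fix x assume "x \<in> (\<lambda>z. ereal (Q z)) ` {z. r < norm z \<and> norm z < 1}"
      then obtain z where z: "x = Q z" "r < norm z" "norm z < 1" by auto
      show "x \<le> G s + ereal \<epsilon>"
      proof (cases "s < norm (\<phi> z)")
        case True
        then have "x \<le> G s" unfolding G_def using z by (auto intro: sup0_upper)
        then show ?thesis using \<epsilon> by (intro add_increasing2) auto
      next
        case False
        then have "x \<le> ereal \<epsilon>" using r0 z by (auto simp: r_def less_imp_le)
        then show ?thesis using G_nonneg by (intro add_increasing)
      qed
    qed (use G_nonneg \<epsilon> in simp)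
    then show "(INF r\<in>{0<..<1}. F r) \<le> G s + ereal \<epsilon>"
      using r by (blast intro: INF_lower2)
  qed
  show ?thesis
    unfolding limsup_norm_INF limsup_phi_INF
    by (rule antisym; rule INF_greatest)
      (auto intro: INF_F_le_G INF_lower2 G_le_F)
qed

lemma vanishing_where_phi_bounded:
  fixes Q A :: "'a::real_normed_vector \<Rightarrow> real" and \<phi> :: "'a \<Rightarrow> 'b::real_normed_vector"
  assumes vanishing: "\<forall>\<epsilon>>0. \<exists>r<1. \<forall>z. r < norm z \<and> norm z < 1 \<longrightarrow> A z < \<epsilon>"
    and nonneg: "\<And>z. norm z < 1 \<Longrightarrow> 0 \<le> Q z"
    and bound: "\<And>z. norm z < 1 \<Longrightarrow> Q z * g (norm (\<phi> z)) \<le> A z"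
    and g_pos: "\<And>t. 0 \<le> t \<Longrightarrow> t < 1 \<Longrightarrow> 0 < g t"
    and g_antitone: "\<And>t u. 0 \<le> t \<Longrightarrow> t \<le> u \<Longrightarrow> u < 1 \<Longrightarrow> g u \<le> g t"
    and s: "0 < s" "s < 1" and \<epsilon>: "0 < \<epsilon>"
  shows "\<exists>r<1. \<forall>z. r < norm z \<and> norm z < 1 \<and> norm (\<phi> z) \<le> s \<longrightarrow> Q z < \<epsilon>"
proof -
  have gs: "0 < g s" using g_pos s by simp
  obtain r where r: "r < 1" "\<And>z. r < norm z \<Longrightarrow> norm z < 1 \<Longrightarrow> A z < \<epsilon> * g s"
    using vanishing \<epsilon> gs by (metis mult_pos_pos)
  have "Q z < \<epsilon>" if z: "r < norm z" "norm z < 1" "norm (\<phi> z) \<le> s" for z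
  proof -
    have "Q z * g s \<le> Q z * g (norm (\<phi> z))"
      using z s nonneg by (intro mult_left_mono g_antitone) auto
    also have "\<dots> \<le> A z" using z(2) by (rule bound)
    also have "\<dots> < \<epsilon> * g s" using z(1,2) by (rule r)
    finally show ?thesis using gs by simp
  qed
  with r show ?thesis by blast
qed

lemma limsup_norm_eq_limsup_phi_weighted:
  fixes Q A :: "'a::real_normed_vector \<Rightarrow> real" and \<phi> :: "'a \<Rightarrow> 'b::real_normed_vector"
  assumes contract: "\<And>z. norm z < 1 \<Longrightarrow> norm (\<phi> z) \<le> norm z"
    and vanishing: "\<forall>\<epsilon>>0. \<exists>r<1. \<forall>z. r < norm z \<and> norm z < 1 \<longrightarrow> A z < \<epsilon>"
    and nonneg: "\<And>z. norm z < 1 \<Longrightarrow> 0 \<le> Q z"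
    and bound: "\<And>z. norm z < 1 \<Longrightarrow> Q z * g (norm (\<phi> z)) \<le> A z"
    and g_pos: "\<And>t. 0 \<le> t \<Longrightarrow> t < 1 \<Longrightarrow> 0 < g t"
    and g_antitone: "\<And>t u. 0 \<le> t \<Longrightarrow> t \<le> u \<Longrightarrow> u < 1 \<Longrightarrow> g u \<le> g t"
  shows "limsup_norm Q = limsup_phi \<phi> Q"
  by (rule limsup_norm_eq_limsup_phi[OF contract nonneg
        vanishing_where_phi_bounded[OF vanishing nonneg bound g_pos g_antitone]])

lemma scaleC_zero_left: "scaleC 0 x = 0"
  using scaleC_of_real[of 0 x] by simp

lemma scaleC_scaleR_commute: "scaleC c (r *\<^sub>R x) = r *\<^sub>R scaleC c x"
  by (metis scaleC_of_real scaleC_scaleC mult.commute)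

lemma scaleC_i_i: "scaleC \<i> (scaleC \<i> x) = - x"
  using scaleC_of_real[of "-1" x] by (simp add: scaleC_scaleC)

lemma inner_scaleC_i_i: "inner (scaleC \<i> x) (scaleC \<i> y) = inner x y"
proof -
  have polar: "inner a b = ((norm (a + b))\<^sup>2 - (norm a)\<^sup>2 - (norm b)\<^sup>2) / 2" for a b :: 'a
    by (simp add: power2_norm_eq_inner inner_add inner_commute)
  show ?thesis
    by (simp only: polar scaleC_add_right[symmetric] norm_scaleC) simp
qed

lemma inner_scaleC_i_left: "inner (scaleC \<i> x) y = - inner x (scaleC \<i> y)"
  using inner_scaleC_i_i[of "scaleC \<i> x" y] by (simp add: scaleC_i_i)

lemma inner_scaleC_i_self: "inner x (scaleC \<i> x) = 0"
  using inner_scaleC_i_left[of x x] by (simp add: inner_commute)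

lemma scaleC_Re_Im: "scaleC h v = Re h *\<^sub>R v + Im h *\<^sub>R scaleC \<i> v"
proof -
  have "h = complex_of_real (Re h) + \<i> * complex_of_real (Im h)" by (simp add: complex_eq_iff)
  then have "scaleC h v = scaleC (complex_of_real (Re h)) v + scaleC \<i> (scaleC (complex_of_real (Im h)) v)"
    by (metis scaleC_add_left scaleC_scaleC)
  then show ?thesis by (simp add: scaleC_of_real scaleC_scaleR_commute)
qed

lemma cinner_add_left: "cinner (a + b) w = cinner a w + cinner b w"
  by (simp add: cinner_def inner_add_left complex_eq_iff)

lemma cinner_scaleR_left: "cinner (r *\<^sub>R a) w = of_real r * cinner a w"
  by (simp add: cinner_def complex_eq_iff)

lemma cinner_scaleR_right: "cinner a (r *\<^sub>R w) = of_real r * cinner a w"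
  by (simp add: cinner_def complex_eq_iff scaleC_scaleR_commute)

lemma cinner_scaleC_left: "cinner (scaleC h v) w = h * cinner v w"
proof -
  have i_left: "cinner (scaleC \<i> a) w = \<i> * cinner a w" for a
    by (simp add: cinner_def complex_eq_iff inner_scaleC_i_left inner_scaleC_i_i scaleC_i_i)
  have "cinner (scaleC h v) w = of_real (Re h) * cinner v w + of_real (Im h) * (\<i> * cinner v w)"
    by (subst scaleC_Re_Im) (simp only: cinner_add_left cinner_scaleR_left i_left)
  also have "\<dots> = (of_real (Re h) + \<i> * of_real (Im h)) * cinner v w" by (simp add: algebra_simps)
  also have "of_real (Re h) + \<i> * of_real (Im h) = h" by (simp add: complex_eq_iff)
  finally show ?thesis .
qed

lemma cinner_zero_left: "cinner 0 w = 0"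
  by (simp add: cinner_def complex_eq_iff)

lemma cinner_self: "cinner x x = of_real ((norm x)\<^sup>2)"
  by (simp add: cinner_def complex_eq_iff inner_scaleC_i_self power2_norm_eq_inner)

text \<open>Rotating \<open>x\<close> by the phase of \<open>cnj \<langle>x, w\<rangle>\<close> makes the complex inner product real, reducing
  the claim to the real Cauchy-Schwarz inequality.\<close>

lemma norm_cinner_le: "cmod (cinner x w) \<le> norm x * norm w"
proof (cases "cinner x w = 0")
  case False
  define c where "c = cinner x w"
  define \<mu> where "\<mu> = cnj c / of_real (cmod c)"
  have "cnj c * c = of_real ((cmod c)\<^sup>2)"
    using complex_norm_square[of c] by (simp add: mult.commute)
  then have "\<mu> * c = of_real (cmod c)"
    using False by (simp add: \<mu>_def c_def power2_eq_square)
  then have "cmod c = Re (cinner (scaleC \<mu> x) w)" by (simp add: cinner_scaleC_left c_def)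
  also have "\<dots> \<le> norm (scaleC \<mu> x) * norm w"
    unfolding cinner_def by (simp add: norm_cauchy_schwarz)
  also have "norm (scaleC \<mu> x) = norm x"
    using False by (simp add: norm_scaleC \<mu>_def c_def norm_divide)
  finally show ?thesis by (simp add: c_def)
qed simp

lemma bounded_linear_scaleC_left: "bounded_linear (\<lambda>h. scaleC h u)"
proof (rule bounded_linear_intro[where K="norm u"])
  show "scaleC (r *\<^sub>R h) u = r *\<^sub>R scaleC h u" for r h
    by (simp add: scaleR_conv_of_real scaleC_scaleC[symmetric] scaleC_of_real)
qed (simp_all add: scaleC_add_left norm_scaleC)

lemma bounded_linear_cinner_left: "bounded_linear (\<lambda>x. cinner x w)"
  by (rule bounded_linear_intro[where K="norm w"])
    (simp_all add: cinner_add_left cinner_scaleR_left scaleR_conv_of_real norm_cinner_le mult.commute)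

lemma holomorphic_on_slice:
  fixes \<phi> :: "'a::complex_hilbert \<Rightarrow> 'b::complex_hilbert"
  assumes "holo_on S \<phi>"
  shows "(\<lambda>\<xi>. cinner (\<phi> (scaleC \<xi> u)) w) holomorphic_on {\<xi>. scaleC \<xi> u \<in> S}"
  unfolding holomorphic_on_def
proof
  fix \<xi> :: complex assume "\<xi> \<in> {\<xi>. scaleC \<xi> u \<in> S}"
  then obtain D where D: "(\<phi> has_derivative D) (at (scaleC \<xi> u))"
      "\<And>c x. D (scaleC c x) = scaleC c (D x)"
    using assms unfolding holo_on_def by blast
  have "((\<lambda>\<xi>. scaleC \<xi> u) has_derivative (\<lambda>h. scaleC h u)) (at \<xi>)"
    by (rule bounded_linear.has_derivative[OF bounded_linear_scaleC_left has_derivative_ident])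
  from has_derivative_compose[OF this D(1)]
  have "((\<lambda>\<xi>. cinner (\<phi> (scaleC \<xi> u)) w) has_derivative (\<lambda>h. cinner (D (scaleC h u)) w)) (at \<xi>)"
    by (intro bounded_linear.has_derivative[OF bounded_linear_cinner_left]) (simp add: o_def)
  moreover have "(\<lambda>h. cinner (D (scaleC h u)) w) = (*) (cinner (D u) w)"
    by (rule ext) (simp add: D(2) cinner_scaleC_left mult.commute)
  ultimately show "(\<lambda>\<xi>. cinner (\<phi> (scaleC \<xi> u)) w) field_differentiable at \<xi> within {\<xi>. scaleC \<xi> u \<in> S}"
    unfolding field_differentiable_def has_field_derivative_def
    by (metis has_derivative_at_withinI)
qed

text \<open>Take unit vectors \<open>u = z/\<parallel>z\<parallel>\<close> and \<open>w = \<phi> z/\<parallel>\<phi> z\<parallel>\<close>; the one-variable Schwarz lemma for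
  \<open>\<xi> \<mapsto> \<langle>\<phi>(\<xi> u), w\<rangle>\<close> at \<open>\<xi> = \<parallel>z\<parallel>\<close> gives the claim.\<close>

lemma Schwarz_Lemma_ball:
  fixes \<phi> :: "'a::complex_hilbert \<Rightarrow> 'b::complex_hilbert"
  assumes holo: "holo_on (ball 0 1) \<phi>"
    and maps: "\<phi> ` ball 0 1 \<subseteq> ball 0 1"
    and zero: "\<phi> 0 = 0"
    and z: "norm z < 1"
  shows "norm (\<phi> z) \<le> norm z"
proof (cases "z = 0 \<or> \<phi> z = 0")
  case False
  define u where "u = (1 / norm z) *\<^sub>R z"
  define w where "w = (1 / norm (\<phi> z)) *\<^sub>R \<phi> z"
  define g where "g \<xi> = cinner (\<phi> (scaleC \<xi> u)) w" for \<xi>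
  have norm_u: "norm u = 1" and norm_w: "norm w = 1" using False by (simp_all add: u_def w_def)
  then have ball_slice: "ball 0 1 \<subseteq> {\<xi>. scaleC \<xi> u \<in> ball 0 1}"
    by (auto simp: norm_scaleC)
  have "g holomorphic_on ball 0 1"
    unfolding g_def by (rule holomorphic_on_subset[OF holomorphic_on_slice[OF holo] ball_slice])
  moreover have "g 0 = 0" by (simp add: g_def scaleC_zero_left zero cinner_zero_left)
  moreover have "norm (g \<xi>) < 1" if "norm \<xi> < 1" for \<xi>
  proof -
    have "norm (\<phi> (scaleC \<xi> u)) < 1" using that ball_slice maps by fastforce
    then show ?thesis unfolding g_def using norm_cinner_le[of "\<phi> (scaleC \<xi> u)" w] norm_w by simp
  qed
  ultimately have "norm (g (of_real (norm z))) \<le> norm (complex_of_real (norm z))"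
    using z by (intro Schwarz_Lemma(1)) auto
  moreover have "scaleC (of_real (norm z)) u = z"
    using False unfolding scaleC_of_real u_def by simp
  moreover have "cinner (\<phi> z) w = of_real (norm (\<phi> z))"
    using False by (simp add: w_def cinner_scaleR_right cinner_self power2_eq_square)
  ultimately show ?thesis by (simp add: g_def)
qed (use zero in auto)

lemma limsup_norm_eq_limsup_phi_sqrt_quotient:
  fixes \<phi> D :: "'a::real_normed_vector \<Rightarrow> 'b::real_normed_vector"
  assumes contract: "\<And>z. norm z < 1 \<Longrightarrow> norm (\<phi> z) \<le> norm z"
    and little: "\<forall>\<epsilon>>0. \<exists>r<1. \<forall>z. r < norm z \<and> norm z < 1 \<longrightarrow> (1 - (norm z)\<^sup>2) * norm (D z) < \<epsilon>"
  shows "limsup_norm (\<lambda>z. (1 - (norm z)\<^sup>2) * norm (D z) / sqrt (1 - (norm (\<phi> z))\<^sup>2))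
       = limsup_phi \<phi> (\<lambda>z. (1 - (norm z)\<^sup>2) * norm (D z) / sqrt (1 - (norm (\<phi> z))\<^sup>2))"
proof (rule limsup_norm_eq_limsup_phi_weighted[OF contract little, where g = "\<lambda>t. sqrt (1 - t\<^sup>2)"])
  fix z :: 'a assume z: "norm z < 1"
  then have "0 \<le> 1 - (norm z)\<^sup>2" "0 < 1 - (norm (\<phi> z))\<^sup>2"
    using contract[OF z] by (simp_all add: abs_square_le_1 abs_square_less_1)
  then show "0 \<le> (1 - (norm z)\<^sup>2) * norm (D z) / sqrt (1 - (norm (\<phi> z))\<^sup>2)"
    and "(1 - (norm z)\<^sup>2) * norm (D z) / sqrt (1 - (norm (\<phi> z))\<^sup>2) * sqrt (1 - (norm (\<phi> z))\<^sup>2)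
      \<le> (1 - (norm z)\<^sup>2) * norm (D z)"
    by simp_all
qed (auto simp: abs_square_less_1 intro: power_mono)

lemma limsup_norm_eq_limsup_phi_cinner_quotient:
  fixes \<phi> D :: "'a::complex_hilbert \<Rightarrow> 'a"
  assumes contract: "\<And>z. norm z < 1 \<Longrightarrow> norm (\<phi> z) \<le> norm z"
    and little: "\<forall>\<epsilon>>0. \<exists>r<1. \<forall>z. r < norm z \<and> norm z < 1 \<longrightarrow> (1 - (norm z)\<^sup>2) * norm (D z) < \<epsilon>"
  shows "limsup_norm (\<lambda>z. (1 - (norm z)\<^sup>2) * cmod (cinner (\<phi> z) (D z)) / (1 - (norm (\<phi> z))\<^sup>2))
       = limsup_phi \<phi> (\<lambda>z. (1 - (norm z)\<^sup>2) * cmod (cinner (\<phi> z) (D z)) / (1 - (norm (\<phi> z))\<^sup>2))"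
proof (rule limsup_norm_eq_limsup_phi_weighted[OF contract little, where g = "\<lambda>t. 1 - t\<^sup>2"])
  fix z :: 'a assume z: "norm z < 1"
  then have phi_z: "norm (\<phi> z) < 1" using contract[OF z] by simp
  have weights: "0 \<le> 1 - (norm z)\<^sup>2" "0 < 1 - (norm (\<phi> z))\<^sup>2"
    using z phi_z by (simp_all add: abs_square_le_1 abs_square_less_1)
  have "cmod (cinner (\<phi> z) (D z)) \<le> norm (\<phi> z) * norm (D z)"
    by (rule norm_cinner_le)
  also have "\<dots> \<le> norm (D z)"
    using phi_z by (intro mult_left_le_one_le) auto
  finally have "(1 - (norm z)\<^sup>2) * cmod (cinner (\<phi> z) (D z)) \<le> (1 - (norm z)\<^sup>2) * norm (D z)"
    using weights by (intro mult_left_mono)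
  with weights
  show "0 \<le> (1 - (norm z)\<^sup>2) * cmod (cinner (\<phi> z) (D z)) / (1 - (norm (\<phi> z))\<^sup>2)"
    and "(1 - (norm z)\<^sup>2) * cmod (cinner (\<phi> z) (D z)) / (1 - (norm (\<phi> z))\<^sup>2) * (1 - (norm (\<phi> z))\<^sup>2)
      \<le> (1 - (norm z)\<^sup>2) * norm (D z)"
    by simp_all
qed (auto simp: abs_square_less_1 intro: power_mono)

theorem proposition4p18:
  fixes \<phi> :: "'a::complex_hilbert \<Rightarrow> 'a"
  assumes holo: "holo_on (ball 0 1) \<phi>"
    and maps: "\<phi> ` ball 0 1 \<subseteq> ball 0 1"
    and zero: "\<phi> 0 = 0"
    and little: "\<forall>\<epsilon>>0. \<exists>r<1. \<forall>z. r < norm z \<and> norm z < 1 \<longrightarrow>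
                   (1 - (norm z)\<^sup>2) * norm (radial_deriv \<phi> z) < \<epsilon>"
  shows "limsup_norm (\<lambda>z. (1 - (norm z)\<^sup>2) * norm (radial_deriv \<phi> z)
                          / sqrt (1 - (norm (\<phi> z))\<^sup>2))
           = limsup_phi \<phi> (\<lambda>z. (1 - (norm z)\<^sup>2) * norm (radial_deriv \<phi> z)
                          / sqrt (1 - (norm (\<phi> z))\<^sup>2))
         \<and> limsup_norm (\<lambda>z. (1 - (norm z)\<^sup>2) * cmod (cinner (\<phi> z) (radial_deriv \<phi> z))
                          / (1 - (norm (\<phi> z))\<^sup>2))
           = limsup_phi \<phi> (\<lambda>z. (1 - (norm z)\<^sup>2) * cmod (cinner (\<phi> z) (radial_deriv \<phi> z))
                          / (1 - (norm (\<phi> z))\<^sup>2))"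
proof -
  have contract: "norm (\<phi> z) \<le> norm z" if "norm z < 1" for z
    using Schwarz_Lemma_ball[OF holo maps zero that] .
  show ?thesis
    using limsup_norm_eq_limsup_phi_sqrt_quotient[OF contract little]
      limsup_norm_eq_limsup_phi_cinner_quotient[OF contract little]
    by blast
qed

end
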